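(* Let $k\in\mathbb N$, $P>0$, and let $F:\mathbb R\to\mathbb C$ be a $1$-periodic integrable function. Suppose that $w\in\mathbb N$ and $Q$ satisfy $1\le Q\le \tfrac12 (P/w)^{k/2}$. Then for every $q\in\mathbb N$ with $(q,w)=1$ one has \[ \int_{\mathfrak M_q(Q,P)}F(\alpha w^k)\,d\alpha = w^{-k}\int_{\mathfrak M_q(Q,P/w)}F(\beta)\,d\beta . \]
   Context: For real $X>0$, $Q\ge1$ and $q\in\mathbb N$ with $q\le Q$, and integers $a$ with $0\le a\le q$, $(a,q)=1$, put $\mathfrak M_{q,a}(Q,X)=\{\alpha\in[0,1):|q\alpha-a|\le QX^{-k}\}$, and let $\mathfrak M_q(Q,X)$ be the union of the sets $\mathfrak M_{q,a}(Q,X)$ over $0\le a\le q$ with $(a,q)=1$. By convention $\mathfrak M_q(Q,X)=\emptyset$ when $q>Q$. *)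

theory Defs
  imports "HOL-Analysis.Analysis"
begin

definition major_arc_qa :: "nat \<Rightarrow> real \<Rightarrow> real \<Rightarrow> nat \<Rightarrow> int \<Rightarrow> real set" where
  "major_arc_qa k Q X q a = {\<alpha> \<in> {0..<1}. \<bar>real q * \<alpha> - real_of_int a\<bar> \<le> Q * inverse (X ^ k)}"

definition major_arc_q :: "nat \<Rightarrow> real \<Rightarrow> real \<Rightarrow> nat \<Rightarrow> real set" where
  "major_arc_q k Q X q =
     (if real q \<le> Q
      then (\<Union>a\<in>{a::int. 0 \<le> a \<and> a \<le> int q \<and> coprime a (int q)}. major_arc_qa k Q X q a)
      else {})"

end

theory Submission
  imports Defs
begin

text \<open>Substituting \<open>\<beta> = \<alpha> w\<^sup>k\<close> maps \<open>\<MM>\<^sub>q(Q,P)\<close> into \<open>[0, w\<^sup>k)\<close>; by periodicity of \<open>F\<close> the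
integral folds back onto \<open>[0,1)\<close>, each \<open>\<beta>\<close> weighted by the number of \<open>j < w\<^sup>k\<close> with
\<open>(\<beta> + j)/w\<^sup>k\<close> on the arc. For such \<open>j\<close> and numerator \<open>a\<close>, the integer \<open>b = a w\<^sup>k - q j\<close>
satisfies \<open>|q\<beta> - b| \<le> Q (P/w)\<^sup>-\<^sup>k \<le> 1/4\<close>, so \<open>b\<close> is the integer nearest to \<open>q\<beta>\<close>.
Since \<open>(q,w) = 1\<close>, every reduced \<open>b \<in> [0,q]\<close> arises from exactly one \<open>j\<close>, and \<open>b\<close> is
reduced iff \<open>a\<close> is; hence the weight is the indicator of \<open>\<MM>\<^sub>q(Q,P/w)\<close>.\<close>

lemma coprime_lift_iff:
  fixes a j n q :: int
  assumes "coprime n q"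
  shows "coprime (a * n - q * j) q \<longleftrightarrow> coprime a q"
proof -
  have "gcd q ((- j) * q + a * n) = gcd q (a * n)" by (rule gcd_add_mult)
  then have "coprime (a * n - q * j) q \<longleftrightarrow> coprime (a * n) q"
    by (simp add: coprime_iff_gcd_eq_1 gcd.commute algebra_simps)
  also have "\<dots> \<longleftrightarrow> coprime a q" using assms by simp
  finally show ?thesis .
qed

lemma lift_index_unique:
  fixes a a' n q :: int and j j' :: nat
  assumes "coprime q n" "q \<noteq> 0" "j < n" "j' < n"
    and "a * n - q * j = a' * n - q * j'"
  shows "j = j'"
proof -
  have "n * (a - a') = q * (int j - int j')" using assms(5) by (simp add: algebra_simps)
  then have "q dvd n * (a - a')" by simp
  then obtain t where t: "a - a' = q * t"
    using assms(1) by (auto simp: coprime_dvd_mult_right_iff)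
  then have "q * (n * t) = q * (int j - int j')"
    using \<open>n * (a - a') = _\<close> by (simp add: algebra_simps)
  then have nt: "n * t = int j - int j'" using assms(2) by simp
  have "t = 0"
  proof (rule ccontr)
    assume "t \<noteq> 0"
    then have "n \<le> \<bar>n * t\<bar>" using assms(3) by (simp add: abs_mult mult_le_cancel_left1)
    then show False using nt assms(3,4) by linarith
  qed
  then show ?thesis using nt by simp
qed

lemma lift_exists:
  fixes b n q :: int
  assumes "coprime n q" "1 \<le> n" "1 \<le> q" "0 \<le> b" "b \<le> q"
  obtains a and j :: nat where "0 \<le> a" "a \<le> q" "j < n" "b = a * n - q * j"
proof -
  obtain u v where uv: "u * n + v * q = 1"
    using bezout_int[of n q] assms(1) by (auto simp: coprime_iff_gcd_eq_1)
  define a0 where "a0 = (b * u) mod q"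
  have a0: "0 \<le> a0" "a0 < q" using assms(3) unfolding a0_def by auto
  have "q dvd a0 - b * u" unfolding a0_def by (metis mod_eq_dvd_iff mod_mod_trivial)
  moreover have "a0 * n - b = (a0 - b * u) * n - q * (b * v)"
  proof -
    have "b = b * (u * n + v * q)" using uv by simp
    then show ?thesis by (simp add: algebra_simps)
  qed
  ultimately obtain j0 where j0: "a0 * n - b = q * j0"
    by (metis dvd_diff dvd_mult2 dvd_triv_left dvdE)
  have "a0 * n \<le> (q - 1) * n" using a0 assms by (intro mult_right_mono) auto
  moreover have "(q - 1) * n = q * n - n" by (simp add: algebra_simps)
  ultimately have "q * j0 < q * n" using j0 assms by linarith
  then have j0n: "j0 < n" using assms(3) by simp
  have "0 \<le> a0 * n" using a0 assms by simp
  then have "q * (- 1) \<le> q * j0" using j0 assms by linarith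
  then have "- 1 \<le> j0" using assms(3) mult_le_cancel_left_pos[of q "- 1" j0] by simp
  \<comment> \<open>\<open>j0 = -1\<close> forces \<open>b = q\<close>, which is reached by \<open>(a, j) = (q, n - 1)\<close> instead\<close>
  then consider "0 \<le> j0" | "j0 = - 1" by linarith
  then show thesis
  proof cases
    case 1
    then show thesis using that[of a0 "nat j0"] a0 j0 j0n by simp
  next
    case 2
    then have "a0 * n = b - q" using j0 by simp
    then have "b = q" using \<open>0 \<le> a0 * n\<close> assms by auto
    then show thesis using that[of q "nat (n - 1)"] assms by (simp add: algebra_simps)
  qed
qed

definition reduced_arc :: "nat \<Rightarrow> real \<Rightarrow> real set" where
  "reduced_arc q \<delta> = {\<alpha> \<in> {0..<1}. \<exists>a::int. 0 \<le> a \<and> a \<le> int q \<and> coprime a (int q)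
                                        \<and> \<bar>real q * \<alpha> - of_int a\<bar> \<le> \<delta>}"

lemma major_arc_q_eq_reduced_arc:
  "major_arc_q k Q X q = (if real q \<le> Q then reduced_arc q (Q * inverse (X ^ k)) else {})"
  by (auto simp: major_arc_q_def major_arc_qa_def reduced_arc_def)

lemma reduced_arc_subset: "reduced_arc q \<delta> \<subseteq> {0..<1}"
  by (auto simp: reduced_arc_def)

lemma reduced_arc_borel: "reduced_arc q \<delta> \<in> sets borel"
proof -
  have "reduced_arc q \<delta> = {0..<1} \<inter> (\<Union>a\<in>{0..int q}.
      if coprime a (int q) then {\<alpha>. \<bar>real q * \<alpha> - of_int a\<bar> \<le> \<delta>} else {})"
    by (auto simp: reduced_arc_def)
  moreover have "{\<alpha>. \<bar>real q * \<alpha> - of_int a\<bar> \<le> \<delta>} \<in> sets borel" for a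
    by (intro borel_closed closed_Collect_le continuous_intros)
  ultimately show ?thesis by simp
qed

lemma lift_mem_reduced_arc:
  fixes n q j :: nat
  assumes "0 \<le> \<beta>" "\<beta> < 1" "j < n"
  shows "(\<beta> + real j) / real n \<in> reduced_arc q \<delta> \<longleftrightarrow>
    (\<exists>a::int. 0 \<le> a \<and> a \<le> int q \<and> coprime a (int q)
      \<and> \<bar>real q * \<beta> - of_int (a * int n - int q * int j)\<bar> \<le> real n * \<delta>)"
proof -
  have n: "real n > 0" "real j + 1 \<le> real n" using assms(3) by auto
  then have "(\<beta> + real j) / real n \<in> {0..<1}" using assms(1,2) by simp
  moreover have "\<bar>real q * ((\<beta> + real j) / real n) - of_int a\<bar> \<le> \<delta> \<longleftrightarrow>
      \<bar>real q * \<beta> - of_int (a * int n - int q * int j)\<bar> \<le> real n * \<delta>" for a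
  proof -
    have "real q * ((\<beta> + real j) / real n) - of_int a
        = (real q * \<beta> - of_int (a * int n - int q * int j)) / real n"
      using n by (simp add: field_simps)
    then show ?thesis using n by (simp add: abs_divide pos_divide_le_eq mult.commute[of \<delta>])
  qed
  ultimately show ?thesis by (simp add: reduced_arc_def)
qed


lemma card_lifts_reduced_arc:
  fixes n q :: nat
  assumes "1 \<le> n" "1 \<le> q" "coprime q n" "0 \<le> \<beta>" "\<beta> < 1" "real n * \<delta> < 1/2"
  shows "real (card {j. j < n \<and> (\<beta> + real j) / real n \<in> reduced_arc q \<delta>})
       = indicator (reduced_arc q (real n * \<delta>)) \<beta>"
proof -
  let ?near = "\<lambda>c::int. \<bar>real q * \<beta> - of_int c\<bar> \<le> real n * \<delta>"
  define S where "S = {j. j < n \<and> (\<beta> + real j) / real n \<in> reduced_arc q \<delta>}"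
  have S_iff: "j \<in> S \<longleftrightarrow> j < n \<and> (\<exists>a. 0 \<le> a \<and> a \<le> int q \<and> coprime a (int q)
      \<and> ?near (a * int n - int q * int j))" for j
    unfolding S_def using lift_mem_reduced_arc[OF assms(4,5)] by blast
  have coprime_lift: "coprime (a * int n - int q * int j) (int q) \<longleftrightarrow> coprime a (int q)" for a j
    using assms(3) by (intro coprime_lift_iff) (simp add: coprime_commute)
  have unique: "j = j'" if jS: "j \<in> S" and j'S: "j' \<in> S" for j j'
  proof -
    obtain a where "j < n" and near: "?near (a * int n - int q * int j)"
      using S_iff jS by blast
    obtain a' where "j' < n" and near': "?near (a' * int n - int q * int j')"
      using S_iff j'S by blast
    have "\<bar>of_int (a * int n - int q * int j) - of_int (a' * int n - int q * int j') :: real\<bar> < 1"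
      using near near' assms(6) by linarith
    then have "\<bar>(a * int n - int q * int j) - (a' * int n - int q * int j')\<bar> < 1"
      by (simp only: flip: of_int_diff of_int_abs of_int_less_1_iff)
    then have "a * int n - int q * int j = a' * int n - int q * int j'" by arith
    then show ?thesis
      using assms \<open>j < n\<close> \<open>j' < n\<close> by (intro lift_index_unique[of "int q" "int n" j j' a a']) auto
  qed
  have nonempty: "S \<noteq> {} \<longleftrightarrow> \<beta> \<in> reduced_arc q (real n * \<delta>)"
  proof
    assume "S \<noteq> {}"
    then obtain j a where "j < n" "0 \<le> a" "a \<le> int q" "coprime a (int q)"
      and near: "?near (a * int n - int q * int j)"
      using S_iff by blast
    moreover have "0 \<le> real q * \<beta>" "real q * \<beta> < real q" using assms by auto
    ultimately have "0 \<le> a * int n - int q * int j" "a * int n - int q * int j \<le> int q"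
      using assms(6) near by linarith+
    then show "\<beta> \<in> reduced_arc q (real n * \<delta>)"
      using near coprime_lift \<open>coprime a (int q)\<close> assms(4,5) unfolding reduced_arc_def
      by (intro CollectI conjI bexI[of _ \<beta>] exI[of _ "a * int n - int q * int j"]) auto
  next
    assume "\<beta> \<in> reduced_arc q (real n * \<delta>)"
    then obtain b where b: "0 \<le> b" "b \<le> int q" "coprime b (int q)" "?near b"
      unfolding reduced_arc_def by blast
    obtain a and j :: nat where "0 \<le> a" "a \<le> int q" "j < n" "b = a * int n - int q * int j"
      using lift_exists[of "int n" "int q" b] assms(1-3) b(1,2) by (auto simp: coprime_commute)
    then have "j \<in> S" using S_iff b(3,4) coprime_lift by auto
    then show "S \<noteq> {}" by blast
  qed
  have "card S = (if S = {} then 0 else 1)"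
  proof (cases "S = {}")
    case False
    then obtain j where "j \<in> S" by blast
    then have "S = {j}" using unique by blast
    then show ?thesis by simp
  qed simp
  then show ?thesis using nonempty unfolding S_def[symmetric] indicator_def by auto
qed


lemma periodic_diff_nat:
  assumes "\<And>x. F (x + 1) = F x"
  shows "F (x - real j) = F x"
proof (induction j)
  case (Suc j)
  have "F (x - real (Suc j)) = F (x - real (Suc j) + 1)" by (rule assms[symmetric])
  with Suc show ?case by simp
qed simp

lemma sum_indicator_unit_intervals:
  "(\<Sum>j<n. indicator {real j..<real j + 1} x) = (indicator {0..<real n} x :: real)"
proof (induction n)
  case (Suc n)
  have "indicator {0..<real (Suc n)} x
      = (indicator {0..<real n} x :: real) + indicator {real n..<real n + 1} x"
    by (auto simp: indicator_def)
  with Suc show ?case by simp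
qed simp

lemma set_integral_periodic_fold:
  fixes F :: "real \<Rightarrow> 'a::{banach, second_countable_topology}"
  assumes periodic: "\<And>x. F (x + 1) = F x"
    and integrable: "set_integrable lborel {0..1} F"
    and S: "S \<in> sets borel" "S \<subseteq> {0..<real n}"
  shows "(LINT x:S|lborel. F x)
       = (LINT \<beta>:{0..<1}|lborel. real (card {j. j < n \<and> \<beta> + real j \<in> S}) *\<^sub>R F \<beta>)"
proof -
  define T where "T j = {0..<1} \<inter> ((\<lambda>\<beta>. \<beta> + real j) -` S)" for j :: nat
  define H where "H j = (\<lambda>\<beta>. indicator (T j) \<beta> *\<^sub>R F \<beta>)" for j
  have H_integrable: "integrable lborel (H j)" for j
  proof -
    have "(\<lambda>\<beta>::real. \<beta> + real j) \<in> borel \<rightarrow>\<^sub>M borel" by measurable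
    from measurable_sets[OF this S(1)] have "T j \<in> sets lborel" by (simp add: T_def)
    then have "set_integrable lborel (T j) F"
      by (rule set_integrable_subset[OF integrable]) (auto simp: T_def)
    then show ?thesis by (simp add: H_def set_integrable_def)
  qed
  have unfold: "indicator S x *\<^sub>R F x = (\<Sum>j<n. H j (x - real j))" for x
  proof -
    have "(\<Sum>j<n. H j (x - real j)) = (\<Sum>j<n. indicator {real j..<real j + 1} x *\<^sub>R indicator S x *\<^sub>R F x)"
      unfolding H_def T_def using periodic_diff_nat[of F, OF periodic]
      by (intro sum.cong) (auto simp: indicator_def)
    also have "\<dots> = ((\<Sum>j<n. indicator {real j..<real j + 1} x) * indicator S x) *\<^sub>R F x"
      by (simp only: scaleR_scaleR scaleR_sum_left[symmetric] sum_distrib_right[symmetric])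
    also have "(\<Sum>j<n. indicator {real j..<real j + 1} x) * indicator S x = (indicator S x :: real)"
      unfolding sum_indicator_unit_intervals using S(2) by (auto simp: indicator_def)
    finally show ?thesis by simp
  qed
  have shift_integrable: "integrable lborel (\<lambda>x. H j (x - real j))" for j
    using lborel_integrable_real_affine_iff[of 1 "H j" "- real j"] H_integrable by simp
  have shift_integral: "integral\<^sup>L lborel (\<lambda>x. H j (x - real j)) = integral\<^sup>L lborel (H j)" for j
    using lborel_integral_real_affine[of 1 "H j" "- real j"] by simp
  have "(LINT x:S|lborel. F x) = (\<Sum>j<n. integral\<^sup>L lborel (\<lambda>x. H j (x - real j)))"
    unfolding set_lebesgue_integral_def unfold
    by (rule Bochner_Integration.integral_sum[where f = "\<lambda>j x. H j (x - real j)"]) (rule shift_integrable)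
  also have "\<dots> = (\<Sum>j<n. integral\<^sup>L lborel (H j))"
    by (simp only: shift_integral)
  also have "\<dots> = integral\<^sup>L lborel (\<lambda>\<beta>. \<Sum>j<n. H j \<beta>)"
    by (rule Bochner_Integration.integral_sum[symmetric]) (rule H_integrable)
  also have "(\<lambda>\<beta>. \<Sum>j<n. H j \<beta>)
      = (\<lambda>\<beta>. indicator {0..<1} \<beta> *\<^sub>R real (card {j. j < n \<and> \<beta> + real j \<in> S}) *\<^sub>R F \<beta>)"
    by (auto simp: H_def T_def indicator_def fun_eq_iff scaleR_sum_left[symmetric] Int_def)
  finally show ?thesis by (simp add: set_lebesgue_integral_def)
qed


lemma set_integral_dilate:
  fixes F :: "real \<Rightarrow> 'a::{banach, second_countable_topology}"
  assumes "c > 0"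
  shows "(LINT \<alpha>:A|lborel. F (\<alpha> * c)) = (1 / c) *\<^sub>R (LINT x:{x. x / c \<in> A}|lborel. F x)"
  using lborel_integral_real_affine[of "1 / c" "\<lambda>\<alpha>. indicator A \<alpha> *\<^sub>R F (\<alpha> * c)" 0] assms
  by (simp add: set_lebesgue_integral_def indicator_def)

lemma set_integral_reduced_arc_dilate:
  fixes F :: "real \<Rightarrow> 'a::{banach, second_countable_topology}" and n q :: nat
  assumes "1 \<le> n" "1 \<le> q" "coprime q n" "real n * \<delta> < 1/2"
    and periodic: "\<And>x. F (x + 1) = F x"
    and integrable: "set_integrable lborel {0..1} F"
  shows "(LINT \<alpha>:reduced_arc q \<delta>|lborel. F (\<alpha> * real n))
       = (1 / real n) *\<^sub>R (LINT \<beta>:reduced_arc q (real n * \<delta>)|lborel. F \<beta>)"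
proof -
  define S where "S = {x. x / real n \<in> reduced_arc q \<delta>}"
  have n: "real n > 0" using assms(1) by simp
  have "(\<lambda>x. x / real n) \<in> borel \<rightarrow>\<^sub>M borel" by measurable
  from measurable_sets[OF this reduced_arc_borel] have S_borel: "S \<in> sets borel"
    by (simp add: S_def vimage_def)
  have "S \<subseteq> {0..<real n}"
  proof
    fix x assume "x \<in> S"
    then have "x / real n \<in> {0..<1}" using reduced_arc_subset unfolding S_def by blast
    then show "x \<in> {0..<real n}" using n by (simp add: divide_simps)
  qed
  then have "(LINT x:S|lborel. F x)
      = (LINT \<beta>:{0..<1}|lborel. real (card {j. j < n \<and> (\<beta> + real j) / real n \<in> reduced_arc q \<delta>}) *\<^sub>R F \<beta>)"
    using set_integral_periodic_fold[OF periodic integrable S_borel] by (simp add: S_def)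
  also have "\<dots> = (LINT \<beta>:{0..<1}|lborel. indicator (reduced_arc q (real n * \<delta>)) \<beta> *\<^sub>R F \<beta>)"
    using card_lifts_reduced_arc[OF assms(1-3) _ _ assms(4)]
    by (intro set_lebesgue_integral_cong) auto
  also have "\<dots> = (LINT \<beta>:reduced_arc q (real n * \<delta>)|lborel. F \<beta>)"
    using subsetD[OF reduced_arc_subset[of q "real n * \<delta>"]] unfolding set_lebesgue_integral_def
    by (intro Bochner_Integration.integral_cong) (auto simp: indicator_def)
  finally show ?thesis
    using set_integral_dilate[OF n, of "reduced_arc q \<delta>" F] by (simp add: S_def)
qed

lemma major_arc_width_le_quarter:
  fixes R Q :: real
  assumes "R > 0" "1 \<le> Q" "Q \<le> 1/2 * R powr (real k / 2)"
  shows "Q * inverse (R ^ k) \<le> 1/4"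
proof -
  have "(R powr (real k / 2))\<^sup>2 = R ^ k"
    using assms(1) by (simp add: power2_eq_square flip: powr_add powr_realpow)
  moreover have "(2 * Q)\<^sup>2 \<le> (R powr (real k / 2))\<^sup>2"
    using assms(2,3) by (intro power_mono) auto
  moreover have "Q \<le> Q\<^sup>2" using assms(2) by (simp add: power2_eq_square)
  ultimately have "4 * Q \<le> R ^ k" by (simp add: power_mult_distrib)
  then show ?thesis using assms(1) by (simp add: field_simps)
qed

theorem lemma2p3:
  fixes k w q :: nat and P Q :: real and F :: "real \<Rightarrow> complex"
  assumes "P > 0"
    and "\<And>x. F (x + 1) = F x"
    and "set_integrable lborel {0..1} F"
    and "w \<ge> 1"
    and "1 \<le> Q" and "Q \<le> 1/2 * (P / real w) powr (real k / 2)"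
    and "q \<ge> 1" and "coprime q w"
  shows "(LINT \<alpha>:major_arc_q k Q P q|lborel. F (\<alpha> * real w ^ k))
       = complex_of_real (inverse (real w ^ k)) * (LINT \<beta>:major_arc_q k Q (P / real w) q|lborel. F \<beta>)"
proof (cases "real q \<le> Q")
  case True
  define \<delta> where "\<delta> = Q * inverse (P ^ k)"
  have width: "real (w ^ k) * \<delta> = Q * inverse ((P / real w) ^ k)"
    using assms(1,4) by (simp add: \<delta>_def power_divide field_simps)
  also have "\<dots> \<le> 1/4"
    using assms(1,4-6) by (intro major_arc_width_le_quarter) auto
  finally have "real (w ^ k) * \<delta> < 1/2" by simp
  then have "(LINT \<alpha>:reduced_arc q \<delta>|lborel. F (\<alpha> * real (w ^ k)))
      = (1 / real (w ^ k)) *\<^sub>R (LINT \<beta>:reduced_arc q (real (w ^ k) * \<delta>)|lborel. F \<beta>)"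
    using assms(2,3,4,7,8) by (intro set_integral_reduced_arc_dilate) auto
  moreover have "major_arc_q k Q P q = reduced_arc q \<delta>"
    "major_arc_q k Q (P / real w) q = reduced_arc q (real (w ^ k) * \<delta>)"
    using True unfolding major_arc_q_eq_reduced_arc width[symmetric] by (simp_all add: \<delta>_def)
  ultimately show ?thesis by (simp add: scaleR_conv_of_real divide_inverse_commute)
qed (simp add: major_arc_q_def set_lebesgue_integral_def)

end
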